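(* Let $P$ and $Q$ be finite posets. If $J(P)$ and $J(Q)$ are both CDE then $J(P)\times J(Q)$ is CDE; if both are mCDE then $J(P)\times J(Q)$ is mCDE; if both are tCDE then $J(P)\times J(Q)=J(P+Q)$ is tCDE.
   Context: $J(P)$ is the poset of order ideals of $P$ ordered by inclusion; $P+Q$ is the disjoint union, and $J(P)\times J(Q)\cong J(P+Q)$ (direct product order). $\mathbb{E}(\mu;f)=\sum f\cdot\mathbb{P}(\mu;\cdot)$. $\mathrm{ddeg}(x)$ is the number of elements covered by $x$; $\mathrm{uni}$ is uniform; $\mathrm{maxchain}$ gives $x$ probability proportional to the number of maximal chains through $x$; $\mathrm{chain}(k)$ gives $x$ probability $\#\{k\text{-chains }c_0<\cdots<c_k\text{ containing }x\}/((k+1)\#\{k\text{-chains}\})$. CDE: $\mathbb{E}(\mathrm{maxchain};\mathrm{ddeg})=\mathbb{E}(\mathrm{uni};\mathrm{ddeg})$; mCDE: $\mathbb{E}(\mathrm{chain}(k);\mathrm{ddeg})=\mathbb{E}(\mathrm{uni};\mathrm{ddeg})$ for all $k$ from $0$ to the length of a longest chain. On $J(P)$: $\mathcal{T}^+_p(I)=1$ iff $p\notin I$ and $p$ minimal in $P\setminus I$; $\mathcal{T}^-_p(I)=1$ iff $p\in I$ and $p$ maximal in $I$. $\mu$ is toggle-symmetric if $\mathbb{E}(\mu;\mathcal{T}^+_p)=\mathbb{E}(\mu;\mathcal{T}^-_p)$ for all $p$; $J(P)$ is tCDE if $\mathbb{E}(\mu;\mathrm{ddeg})=\mathbb{E}(\mathrm{uni}_{J(P)};\mathrm{ddeg})$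 for every toggle-symmetric $\mu$ on $J(P)$. *)

theory Defs
  imports Complex_Main
begin

definition fposet :: "'a set \<Rightarrow> ('a \<Rightarrow> 'a \<Rightarrow> bool) \<Rightarrow> bool" where
  "fposet X le \<longleftrightarrow> finite X
     \<and> (\<forall>x\<in>X. le x x)
     \<and> (\<forall>x\<in>X. \<forall>y\<in>X. le x y \<and> le y x \<longrightarrow> x = y)
     \<and> (\<forall>x\<in>X. \<forall>y\<in>X. \<forall>z\<in>X. le x y \<and> le y z \<longrightarrow> le x z)"

definition slt :: "('a \<Rightarrow> 'a \<Rightarrow> bool) \<Rightarrow> 'a \<Rightarrow> 'a \<Rightarrow> bool" where
  "slt le x y \<longleftrightarrow> le x y \<and> x \<noteq> y"

text \<open>y covers x\<close>
definition covers :: "'a set \<Rightarrow> ('a \<Rightarrow> 'a \<Rightarrow> bool) \<Rightarrow> 'a \<Rightarrow> 'a \<Rightarrow> bool" where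
  "covers X le x y \<longleftrightarrow> x \<in> X \<and> y \<in> X \<and> slt le x y
     \<and> \<not> (\<exists>z\<in>X. slt le x z \<and> slt le z y)"

definition ddeg :: "'a set \<Rightarrow> ('a \<Rightarrow> 'a \<Rightarrow> bool) \<Rightarrow> 'a \<Rightarrow> nat" where
  "ddeg X le y = card {x \<in> X. covers X le x y}"

definition E_uni_ddeg :: "'a set \<Rightarrow> ('a \<Rightarrow> 'a \<Rightarrow> bool) \<Rightarrow> real" where
  "E_uni_ddeg X le = (\<Sum>x\<in>X. real (ddeg X le x)) / real (card X)"

text \<open>k-chains c_0 < c_1 < ... < c_k, as strictly increasing lists of length k+1\<close>
definition kchains :: "'a set \<Rightarrow> ('a \<Rightarrow> 'a \<Rightarrow> bool) \<Rightarrow> nat \<Rightarrow> 'a list set" where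
  "kchains X le k = {cs. length cs = Suc k \<and> set cs \<subseteq> X \<and> sorted_wrt (slt le) cs}"

definition E_chain_ddeg :: "'a set \<Rightarrow> ('a \<Rightarrow> 'a \<Rightarrow> bool) \<Rightarrow> nat \<Rightarrow> real" where
  "E_chain_ddeg X le k =
     (\<Sum>x\<in>X. real (ddeg X le x)
        * (real (card {cs \<in> kchains X le k. x \<in> set cs})
           / (real (Suc k) * real (card (kchains X le k)))))"

definition is_chain :: "'a set \<Rightarrow> ('a \<Rightarrow> 'a \<Rightarrow> bool) \<Rightarrow> 'a set \<Rightarrow> bool" where
  "is_chain X le C \<longleftrightarrow> C \<subseteq> X \<and> (\<forall>x\<in>C. \<forall>y\<in>C. le x y \<or> le y x)"

definition maxchains :: "'a set \<Rightarrow> ('a \<Rightarrow> 'a \<Rightarrow> bool) \<Rightarrow> 'a set set" where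
  "maxchains X le = {C. is_chain X le C \<and> (\<forall>D. is_chain X le D \<and> C \<subseteq> D \<longrightarrow> D = C)}"

definition chain_length :: "'a set \<Rightarrow> ('a \<Rightarrow> 'a \<Rightarrow> bool) \<Rightarrow> nat" where
  "chain_length X le = Max {card C - 1 | C. is_chain X le C}"

definition E_maxchain_ddeg :: "'a set \<Rightarrow> ('a \<Rightarrow> 'a \<Rightarrow> bool) \<Rightarrow> real" where
  "E_maxchain_ddeg X le =
     (\<Sum>x\<in>X. real (ddeg X le x)
        * (real (card {C \<in> maxchains X le. x \<in> C})
           / (\<Sum>y\<in>X. real (card {C \<in> maxchains X le. y \<in> C}))))"

definition CDE :: "'a set \<Rightarrow> ('a \<Rightarrow> 'a \<Rightarrow> bool) \<Rightarrow> bool" where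
  "CDE X le \<longleftrightarrow> E_maxchain_ddeg X le = E_uni_ddeg X le"

definition mCDE :: "'a set \<Rightarrow> ('a \<Rightarrow> 'a \<Rightarrow> bool) \<Rightarrow> bool" where
  "mCDE X le \<longleftrightarrow> (\<forall>k \<le> chain_length X le. E_chain_ddeg X le k = E_uni_ddeg X le)"

definition ideals :: "'a set \<Rightarrow> ('a \<Rightarrow> 'a \<Rightarrow> bool) \<Rightarrow> 'a set set" where
  "ideals P le = {I. I \<subseteq> P \<and> (\<forall>x\<in>I. \<forall>y\<in>P. le y x \<longrightarrow> y \<in> I)}"

text \<open>J(P) as a poset: carrier ideals P le, order inclusion\<close>
abbreviation J_le :: "'a set \<Rightarrow> 'a set \<Rightarrow> bool" where
  "J_le \<equiv> (\<subseteq>)"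

definition prod_le :: "('a \<Rightarrow> 'a \<Rightarrow> bool) \<Rightarrow> ('b \<Rightarrow> 'b \<Rightarrow> bool) \<Rightarrow> 'a \<times> 'b \<Rightarrow> 'a \<times> 'b \<Rightarrow> bool" where
  "prod_le le1 le2 p q \<longleftrightarrow> le1 (fst p) (fst q) \<and> le2 (snd p) (snd q)"

fun sum_le :: "('a \<Rightarrow> 'a \<Rightarrow> bool) \<Rightarrow> ('b \<Rightarrow> 'b \<Rightarrow> bool) \<Rightarrow> 'a + 'b \<Rightarrow> 'a + 'b \<Rightarrow> bool" where
  "sum_le le1 le2 (Inl a) (Inl b) = le1 a b"
| "sum_le le1 le2 (Inr a) (Inr b) = le2 a b"
| "sum_le le1 le2 _ _ = False"

definition Tplus :: "'a set \<Rightarrow> ('a \<Rightarrow> 'a \<Rightarrow> bool) \<Rightarrow> 'a \<Rightarrow> 'a set \<Rightarrow> real" where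
  "Tplus P le p I = (if p \<in> P \<and> p \<notin> I \<and> (\<forall>q\<in>P - I. le q p \<longrightarrow> q = p) then 1 else 0)"

definition Tminus :: "'a set \<Rightarrow> ('a \<Rightarrow> 'a \<Rightarrow> bool) \<Rightarrow> 'a \<Rightarrow> 'a set \<Rightarrow> real" where
  "Tminus P le p I = (if p \<in> I \<and> (\<forall>q\<in>I. le p q \<longrightarrow> q = p) then 1 else 0)"

definition is_distr :: "'b set \<Rightarrow> ('b \<Rightarrow> real) \<Rightarrow> bool" where
  "is_distr S \<mu> \<longleftrightarrow> (\<forall>x\<in>S. 0 \<le> \<mu> x) \<and> (\<Sum>x\<in>S. \<mu> x) = 1"

definition Expect :: "'b set \<Rightarrow> ('b \<Rightarrow> real) \<Rightarrow> ('b \<Rightarrow> real) \<Rightarrow> real" where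
  "Expect S \<mu> f = (\<Sum>x\<in>S. f x * \<mu> x)"

definition toggle_symmetric :: "'a set \<Rightarrow> ('a \<Rightarrow> 'a \<Rightarrow> bool) \<Rightarrow> ('a set \<Rightarrow> real) \<Rightarrow> bool" where
  "toggle_symmetric P le \<mu> \<longleftrightarrow>
     (\<forall>p\<in>P. Expect (ideals P le) \<mu> (Tplus P le p) = Expect (ideals P le) \<mu> (Tminus P le p))"

definition tCDE :: "'a set \<Rightarrow> ('a \<Rightarrow> 'a \<Rightarrow> bool) \<Rightarrow> bool" where
  "tCDE P le \<longleftrightarrow>
     (\<forall>\<mu>. is_distr (ideals P le) \<mu> \<and> toggle_symmetric P le \<mu> \<longrightarrow>
        Expect (ideals P le) \<mu> (\<lambda>I. real (ddeg (ideals P le) J_le I))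
          = E_uni_ddeg (ideals P le) J_le)"

end

theory Submission
  imports Defs
begin

text \<open>
  Write g for the down-degree minus its uniform mean and T_j for the sum of g over all points of all
  strict j-chains. mCDE says that T_j = 0 for every j, and for a graded poset of rank m, whose
  maximal chains are exactly its m-chains, CDE says that T_m = 0. Summing g over multichains instead
  gives S_k = \<Sum>_j C(k+1, j+1) T_j. A multichain of X \<times> Y is a pair of multichains and the
  down-degree of a product is additive, so S_k(X \<times> Y) = S_k(X) A_k(Y) + A_k(X) S_k(Y), where A_k
  counts multichains. If all T_j vanish for X and Y, then so do all S_k, hence all S_k and T_j of
  X \<times> Y. Under CDE only the T_j with j \<ge> m vanish, so S_k(X) and A_k(X) grow like polynomials of
  degree m in k. Then S_k(X \<times> Y) grows with degree at most m + n, which forces its top coefficient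
  T_(m+n) to vanish.

  For tCDE, J(P + Q) is isomorphic to J(P) \<times> J(Q), the down-degree is additive, and both marginals
  of a toggle-symmetric distribution are toggle-symmetric, because a toggle at p \<in> P only sees the
  P-part of an ideal.
\<close>

lemma fposetD:
  assumes "fposet X le"
  shows "finite X" "x \<in> X \<Longrightarrow> le x x"
    "x \<in> X \<Longrightarrow> y \<in> X \<Longrightarrow> le x y \<Longrightarrow> le y x \<Longrightarrow> x = y"
    "x \<in> X \<Longrightarrow> y \<in> X \<Longrightarrow> z \<in> X \<Longrightarrow> le x y \<Longrightarrow> le y z \<Longrightarrow> le x z"
  using assms unfolding fposet_def by blast+

lemma fposet_has_minimal:
  assumes fp: "fposet X le" and "S \<subseteq> X" "S \<noteq> {}"
  shows "\<exists>m\<in>S. \<forall>y\<in>S. le y m \<longrightarrow> y = m"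
proof -
  have "finite S" using assms fposetD(1) finite_subset by blast
  then show ?thesis using assms(3,2)
  proof (induction S rule: finite_ne_induct)
    case (insert x S)
    then obtain m where m: "m \<in> S" "\<forall>y\<in>S. le y m \<longrightarrow> y = m" by auto
    show ?case
    proof (cases "le x m")
      case True
      have "y = x" if "y \<in> S" "le y x" for y
        using that True m insert.prems fposetD(3,4)[OF fp] by (metis insert_subset subsetD)
      then show ?thesis by blast
    qed (use m in auto)
  qed auto
qed

lemma sorted_wrt_slt_distinct: "sorted_wrt (slt le) xs \<Longrightarrow> distinct xs"
  by (induction xs) (auto simp: slt_def)

lemma kchainsD:
  assumes "L \<in> kchains X le k"
  shows "length L = Suc k" "set L \<subseteq> X" "sorted_wrt (slt le) L" "distinct L"
    "card (set L) = Suc k"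
  using assms sorted_wrt_slt_distinct distinct_card unfolding kchains_def by fastforce+

lemma finite_kchains: "finite X \<Longrightarrow> finite (kchains X le k)"
  unfolding kchains_def
  by (rule finite_subset[OF _ finite_lists_length_eq[of X "Suc k"]]) auto

lemma is_chain_subset: "is_chain X le C \<Longrightarrow> D \<subseteq> C \<Longrightarrow> is_chain X le D"
  unfolding is_chain_def by blast

lemma is_chain_set_kchain:
  assumes fp: "fposet X le" and L: "L \<in> kchains X le k"
  shows "is_chain X le (set L)"
  unfolding is_chain_def
proof (intro conjI ballI)
  show "set L \<subseteq> X" using kchainsD(2)[OF L] .
  fix x y assume "x \<in> set L" "y \<in> set L"
  then obtain i j where ij: "i < length L" "j < length L" "x = L ! i" "y = L ! j"
    by (auto simp: in_set_conv_nth)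
  then have "x \<in> X" using kchainsD(2)[OF L] nth_mem by blast
  then show "le x y \<or> le y x"
    using kchainsD(3)[OF L] ij fposetD(2)[OF fp] linorder_cases[of i j]
    by (metis sorted_wrt_iff_nth_less slt_def)
qed

lemma ex_kchain_of_chain:
  assumes fp: "fposet X le" and "is_chain X le C" "card C = Suc k"
  shows "\<exists>L \<in> kchains X le k. set L = C"
  using assms(2,3)
proof (induction k arbitrary: C)
  case 0
  then obtain x where "C = {x}" by (auto simp: card_Suc_eq)
  then show ?case using 0 unfolding kchains_def is_chain_def
    by (intro bexI[of _ "[x]"]) auto
next
  case (Suc k)
  have CX: "C \<subseteq> X" using Suc.prems unfolding is_chain_def by auto
  have "C \<noteq> {}" using Suc.prems by auto
  then obtain m where m: "m \<in> C" "\<forall>y\<in>C. le y m \<longrightarrow> y = m"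
    using fposet_has_minimal[OF fp CX] by blast
  have "finite C" using CX fposetD(1)[OF fp] finite_subset by blast
  then obtain L where L: "L \<in> kchains X le k" "set L = C - {m}"
    using Suc.IH[of "C - {m}"] Suc.prems m is_chain_subset by fastforce
  have "\<forall>y\<in>set L. slt le m y"
    using L(2) Suc.prems m unfolding is_chain_def slt_def by blast
  then show ?case
    using L m CX by (intro bexI[of _ "m # L"]) (auto simp: kchains_def)
qed

lemma sorted_wrt_slt_eqI:
  assumes fp: "fposet X le"
  shows "sorted_wrt (slt le) L1 \<Longrightarrow> sorted_wrt (slt le) L2 \<Longrightarrow> set L1 \<subseteq> X
     \<Longrightarrow> set L1 = set L2 \<Longrightarrow> L1 = L2"
proof (induction L1 arbitrary: L2)
  case (Cons a L1)
  then obtain b L2' where L2: "L2 = b # L2'" by (cases L2) auto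
  have "a = b"
  proof (rule ccontr)
    assume ne: "a \<noteq> b"
    then have "slt le b a" "slt le a b" "a \<in> X" "b \<in> X"
      using Cons.prems L2 by (auto simp: insert_eq_iff)
    then show False using fposetD(3)[OF fp] ne unfolding slt_def by blast
  qed
  moreover have "a \<notin> set L1" "b \<notin> set L2'" using Cons.prems(1,2) L2 by (auto simp: slt_def)
  ultimately have "set L1 = set L2'" using Cons.prems(4) L2 by auto
  then show ?case using Cons.IH Cons.prems L2 \<open>a = b\<close> by auto
qed simp

lemma inj_on_set_kchains: "fposet X le \<Longrightarrow> inj_on set (kchains X le k)"
  by (intro inj_onI sorted_wrt_slt_eqI) (auto dest: kchainsD)

lemma finite_chain_lengths: "fposet X le \<Longrightarrow> finite {card C - 1 | C. is_chain X le C}"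
proof -
  assume fp: "fposet X le"
  have "{card C - 1 | C. is_chain X le C} \<subseteq> (\<lambda>C. card C - 1) ` Pow X"
    unfolding is_chain_def by blast
  then show ?thesis using fposetD(1)[OF fp] finite_subset by blast
qed

lemma card_chain_le_chain_length:
  "fposet X le \<Longrightarrow> is_chain X le C \<Longrightarrow> card C - 1 \<le> chain_length X le"
  unfolding chain_length_def using finite_chain_lengths by (intro Max_ge) auto

lemma kchains_eq_empty_if_gt_chain_length:
  assumes fp: "fposet X le" and "chain_length X le < k"
  shows "kchains X le k = {}"
  using card_chain_le_chain_length[OF fp is_chain_set_kchain[OF fp]] kchainsD(5) assms(2)
  by fastforce

lemma kchains_nonempty:
  assumes fp: "fposet X le" and "X \<noteq> {}" and k: "k \<le> chain_length X le"
  shows "kchains X le k \<noteq> {}"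
proof -
  have "is_chain X le {}" unfolding is_chain_def by simp
  then have "chain_length X le \<in> {card C - 1 | C. is_chain X le C}"
    unfolding chain_length_def by (intro Max_in finite_chain_lengths[OF fp]) blast
  then obtain C where C: "is_chain X le C" "chain_length X le = card C - 1" by blast
  obtain D where D: "is_chain X le D" "card D = Suc k"
  proof (cases "card C = 0")
    case True
    obtain x where "x \<in> X" using assms(2) by blast
    then have "is_chain X le {x}" unfolding is_chain_def using fposetD(2)[OF fp] by simp
    then show ?thesis using that True C k by simp
  next
    case False
    then have "Suc k \<le> card C" using C(2) k by linarith
    then obtain D where "D \<subseteq> C" "card D = Suc k" by (rule obtain_subset_with_card_n)
    then show ?thesis using that is_chain_subset[OF C(1)] by blast
  qed
  then show ?thesis using ex_kchain_of_chain[OF fp] by blast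
qed

subsection \<open>Graded posets and their maximal chains\<close>

definition graded :: "'a set \<Rightarrow> ('a \<Rightarrow> 'a \<Rightarrow> bool) \<Rightarrow> ('a \<Rightarrow> nat) \<Rightarrow> nat \<Rightarrow> bool" where
  "graded X le r m \<longleftrightarrow> (\<forall>x\<in>X. r x \<le> m) \<and> (\<forall>x\<in>X. \<forall>y\<in>X. slt le x y \<longrightarrow> r x < r y)
     \<and> (\<forall>x\<in>X. \<forall>y\<in>X. slt le x y \<longrightarrow> (\<exists>z\<in>X. le x z \<and> le z y \<and> r z = Suc (r x)))
     \<and> (\<exists>b\<in>X. r b = 0 \<and> (\<forall>x\<in>X. le b x)) \<and> (\<exists>t\<in>X. r t = m \<and> (\<forall>x\<in>X. le x t))"

lemma graded_rank_less:
  "graded X le r m \<Longrightarrow> x \<in> X \<Longrightarrow> y \<in> X \<Longrightarrow> slt le x y \<Longrightarrow> r x < r y"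
  unfolding graded_def by blast

lemma card_chain_le_graded:
  assumes g: "graded X le r m" and C: "is_chain X le C"
  shows "card C \<le> Suc m"
proof -
  have "inj_on r C"
    using C graded_rank_less[OF g] unfolding is_chain_def inj_on_def slt_def
    by (metis less_irrefl subsetD)
  moreover have "r ` C \<subseteq> {..m}" using g C unfolding graded_def is_chain_def by auto
  ultimately show ?thesis using card_mono[of "{..m}" "r ` C"] card_image by fastforce
qed

lemma maxchain_mem_if_comparable:
  assumes fp: "fposet X le" and C: "C \<in> maxchains X le" and "z \<in> X" "\<forall>c\<in>C. le z c \<or> le c z"
  shows "z \<in> C"
proof -
  have "is_chain X le (insert z C)"
    using C assms(3,4) fposetD(2)[OF fp] unfolding maxchains_def is_chain_def by blast
  then show ?thesis using C unfolding maxchains_def by blast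
qed

lemma comparable_if_between_successive:
  assumes fp: "fposet X le" and ch: "is_chain X le C" and "c \<in> C" "d \<in> C"
    and succ: "\<forall>e\<in>C. slt le c e \<longrightarrow> le d e"
    and z: "z \<in> X" "le c z" "le z d"
  shows "\<forall>e\<in>C. le z e \<or> le e z"
proof
  fix e assume e: "e \<in> C"
  then have "e \<in> X" "c \<in> X" "d \<in> X" using ch \<open>c \<in> C\<close> \<open>d \<in> C\<close> unfolding is_chain_def by auto
  moreover have "le e c \<or> e = c \<or> slt le c e"
    using ch e \<open>c \<in> C\<close> unfolding is_chain_def slt_def by blast
  ultimately show "le z e \<or> le e z"
    using succ e z fposetD(4)[OF fp] by blast
qed

lemma maxchain_rank_step:
  assumes fp: "fposet X le" and g: "graded X le r m" and C: "C \<in> maxchains X le"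
    and c: "c \<in> C" "r c < m"
  shows "\<exists>d\<in>C. r d = Suc (r c)"
proof -
  have ch: "is_chain X le C" using C unfolding maxchains_def by blast
  then have CX: "C \<subseteq> X" unfolding is_chain_def by blast
  have cX: "c \<in> X" using c CX by blast
  obtain t where t: "t \<in> X" "r t = m" "\<forall>x\<in>X. le x t" using g unfolding graded_def by blast
  have "t \<in> C" using maxchain_mem_if_comparable[OF fp C t(1)] t(3) CX by blast
  define U where "U = {d\<in>C. slt le c d}"
  have "t \<in> U" unfolding U_def slt_def using \<open>t \<in> C\<close> t cX c by auto
  then obtain d where d: "d \<in> U" "\<forall>e\<in>U. r d \<le> r e"
    using ex_has_least_nat[of "\<lambda>d. d \<in> U" t r] by blast
  have dC: "d \<in> C" and dX: "d \<in> X" and cd: "slt le c d" using d(1) CX unfolding U_def by auto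
  have succ: "\<forall>e\<in>C. slt le c e \<longrightarrow> le d e"
  proof (intro ballI impI)
    fix e assume "e \<in> C" "slt le c e"
    moreover from this have "\<not> slt le e d"
      using d(2) graded_rank_less[OF g _ dX] CX unfolding U_def by fastforce
    ultimately show "le d e" using ch dC unfolding is_chain_def slt_def by blast
  qed
  show ?thesis
  proof (rule ccontr)
    assume "\<not> ?thesis"
    then have big: "Suc (r c) < r d"
      using dC graded_rank_less[OF g cX dX cd] by (metis Suc_lessI)
    obtain z where z: "z \<in> X" "le c z" "le z d" "r z = Suc (r c)"
      using g cX dX cd unfolding graded_def by blast
    then have "z \<in> U"
      using maxchain_mem_if_comparable[OF fp C z(1) comparable_if_between_successive[OF fp ch c(1) dC succ z(1-3)]]
      unfolding U_def slt_def by auto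
    then show False using d(2) big z(4) by fastforce
  qed
qed

lemma card_maxchain_graded:
  assumes fp: "fposet X le" and g: "graded X le r m" and C: "C \<in> maxchains X le"
  shows "card C = Suc m"
proof -
  have ch: "is_chain X le C" using C unfolding maxchains_def by blast
  then have CX: "C \<subseteq> X" and finC: "finite C"
    using fposetD(1)[OF fp] finite_subset unfolding is_chain_def by blast+
  obtain b where b: "b \<in> X" "r b = 0" "\<forall>x\<in>X. le b x" using g unfolding graded_def by blast
  have "b \<in> C" using maxchain_mem_if_comparable[OF fp C b(1)] b(3) CX by blast
  have "\<exists>c\<in>C. r c = s" if "s \<le> m" for s
    using that
  proof (induction s)
    case 0 then show ?case using \<open>b \<in> C\<close> b(2) by blast
  next
    case (Suc s)
    then show ?case using maxchain_rank_step[OF fp g C] by fastforce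
  qed
  then have "{..m} \<subseteq> r ` C" by force
  then have "card {..m} \<le> card (r ` C)" by (rule card_mono[OF finite_imageI[OF finC]])
  then have "Suc m \<le> card C" using card_image_le[OF finC, of r] by simp
  then show ?thesis using card_chain_le_graded[OF g ch] by simp
qed

lemma maxchains_nonempty:
  assumes fp: "fposet X le"
  shows "maxchains X le \<noteq> {}"
proof -
  define Ch where "Ch = {C. is_chain X le C}"
  have finCh: "finite Ch" using fposetD(1)[OF fp] unfolding Ch_def is_chain_def by simp
  have "{} \<in> Ch" unfolding Ch_def is_chain_def by blast
  then have "Max (card ` Ch) \<in> card ` Ch" using finCh by (intro Max_in) auto
  then obtain C where C: "C \<in> Ch" "card C = Max (card ` Ch)" by auto
  then have Cmax: "\<forall>D\<in>Ch. card D \<le> card C" using finCh by simp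
  have "C \<in> maxchains X le" unfolding maxchains_def
  proof (intro CollectI conjI allI impI)
    show "is_chain X le C" using C unfolding Ch_def by blast
    fix D assume D: "is_chain X le D \<and> C \<subseteq> D"
    then have "finite D" using fposetD(1)[OF fp] finite_subset unfolding is_chain_def by blast
    then show "D = C" using D Cmax card_seteq unfolding Ch_def by blast
  qed
  then show ?thesis by blast
qed

lemma maxchains_graded:
  assumes fp: "fposet X le" and g: "graded X le r m"
  shows "maxchains X le = set ` kchains X le m"
proof
  show "maxchains X le \<subseteq> set ` kchains X le m"
    using ex_kchain_of_chain[OF fp _ card_maxchain_graded[OF fp g]]
    unfolding maxchains_def by blast
  show "set ` kchains X le m \<subseteq> maxchains X le"
  proof
    fix C assume "C \<in> set ` kchains X le m"
    then obtain L where L: "L \<in> kchains X le m" "C = set L" by blast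
    have ch: "is_chain X le C" and cc: "card C = Suc m"
      using is_chain_set_kchain[OF fp L(1)] kchainsD(5)[OF L(1)] L(2) by auto
    show "C \<in> maxchains X le" unfolding maxchains_def
    proof (intro CollectI conjI allI impI)
      fix D assume D: "is_chain X le D \<and> C \<subseteq> D"
      then have "finite D" using fposetD(1)[OF fp] finite_subset unfolding is_chain_def by blast
      then show "D = C" using D cc card_chain_le_graded[OF g] card_seteq by metis
    qed (rule ch)
  qed
qed

lemma chain_length_graded:
  assumes fp: "fposet X le" and g: "graded X le r m"
  shows "chain_length X le = m"
proof (rule antisym)
  obtain C where C: "C \<in> maxchains X le" using maxchains_nonempty[OF fp] by blast
  then show "m \<le> chain_length X le"
    using card_chain_le_chain_length[OF fp] card_maxchain_graded[OF fp g]
    unfolding maxchains_def by fastforce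
  have "\<forall>n\<in>{card C - 1 | C. is_chain X le C}. n \<le> m"
    using card_chain_le_graded[OF g] by fastforce
  moreover have "{card C - 1 | C. is_chain X le C} \<noteq> {}"
    using C unfolding maxchains_def by blast
  ultimately show "chain_length X le \<le> m"
    unfolding chain_length_def using finite_chain_lengths[OF fp] by simp
qed

lemma finite_ideals: "finite P \<Longrightarrow> finite (ideals P le)"
  unfolding ideals_def by (auto intro: finite_subset)

lemma fposet_ideals: "finite P \<Longrightarrow> fposet (ideals P le) J_le"
  using finite_ideals unfolding fposet_def by blast

lemma empty_in_ideals: "{} \<in> ideals P le"
  unfolding ideals_def by auto

lemma graded_ideals:
  assumes fp: "fposet P le"
  shows "graded (ideals P le) J_le card (card P)"
  unfolding graded_def
proof (intro conjI)
  have finP: "finite P" using fposetD(1)[OF fp] .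
  then show "\<forall>I\<in>ideals P le. card I \<le> card P"
    using card_mono unfolding ideals_def by blast
  show "\<forall>I\<in>ideals P le. \<forall>K\<in>ideals P le. slt J_le I K \<longrightarrow> card I < card K"
  proof (intro ballI impI)
    fix I K assume "K \<in> ideals P le" "slt J_le I K"
    then have "I \<subset> K" "finite K" using finP finite_subset unfolding ideals_def slt_def by auto
    then show "card I < card K" by (simp add: psubset_card_mono)
  qed
  show "\<forall>I\<in>ideals P le. \<forall>K\<in>ideals P le. slt J_le I K \<longrightarrow>
          (\<exists>Z\<in>ideals P le. J_le I Z \<and> J_le Z K \<and> card Z = Suc (card I))"
  proof (intro ballI impI)
    fix I K assume I: "I \<in> ideals P le" and K: "K \<in> ideals P le" and IK: "slt J_le I K"
    have "K - I \<subseteq> P" "K - I \<noteq> {}" using K IK unfolding ideals_def slt_def by blast+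
    then obtain p where p: "p \<in> K - I" "\<forall>y\<in>K - I. le y p \<longrightarrow> y = p"
      using fposet_has_minimal[OF fp] by blast
    have "insert p I \<in> ideals P le" unfolding ideals_def
    proof (intro CollectI conjI ballI impI)
      show "insert p I \<subseteq> P" using I \<open>K - I \<subseteq> P\<close> p(1) unfolding ideals_def by blast
      fix x y assume "x \<in> insert p I" "y \<in> P" "le y x"
      then show "y \<in> insert p I" using I K p unfolding ideals_def by blast
    qed
    moreover have "finite I" using I finP finite_subset unfolding ideals_def by blast
    then have "card (insert p I) = Suc (card I)" using p(1) by simp
    ultimately show "\<exists>Z\<in>ideals P le. J_le I Z \<and> J_le Z K \<and> card Z = Suc (card I)"
      using IK p unfolding slt_def by blast
  qed
  show "\<exists>B\<in>ideals P le. card B = 0 \<and> (\<forall>I\<in>ideals P le. J_le B I)"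
    using empty_in_ideals by force
  show "\<exists>T\<in>ideals P le. card T = card P \<and> (\<forall>I\<in>ideals P le. J_le I T)"
    unfolding ideals_def by blast
qed

lemma fposet_prod:
  assumes X: "fposet X leX" and Y: "fposet Y leY"
  shows "fposet (X \<times> Y) (prod_le leX leY)"
  unfolding fposet_def
proof (intro conjI ballI impI)
  show "finite (X \<times> Y)" using fposetD(1)[OF X] fposetD(1)[OF Y] by simp
  fix p q r assume p: "p \<in> X \<times> Y" and q: "q \<in> X \<times> Y" and r: "r \<in> X \<times> Y"
  show "prod_le leX leY p p"
    using p fposetD(2)[OF X] fposetD(2)[OF Y] unfolding prod_le_def by auto
  show "p = q" if "prod_le leX leY p q \<and> prod_le leX leY q p"
    using that p q fposetD(3)[OF X] fposetD(3)[OF Y] unfolding prod_le_def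
    by (metis mem_Times_iff prod_eqI)
  show "prod_le leX leY p r" if "prod_le leX leY p q \<and> prod_le leX leY q r"
    using that p q r fposetD(4)[OF X, of "fst p" "fst q" "fst r"]
      fposetD(4)[OF Y, of "snd p" "snd q" "snd r"]
    unfolding prod_le_def by auto
qed

lemma graded_rank_mono:
  "graded X le r m \<Longrightarrow> x \<in> X \<Longrightarrow> y \<in> X \<Longrightarrow> le x y \<Longrightarrow> r x \<le> r y"
  using graded_rank_less unfolding slt_def by fastforce

lemma graded_prod_step:
  assumes fX: "fposet X leX" and fY: "fposet Y leY"
    and gX: "graded X leX rX m" and gY: "graded Y leY rY n"
    and ab: "a \<in> X" "b \<in> Y" and cd: "c \<in> X" "d \<in> Y" and lt: "slt (prod_le leX leY) (a, b) (c, d)"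
  shows "rX a + rY b < rX c + rY d \<and>
    (\<exists>z\<in>X \<times> Y. prod_le leX leY (a, b) z \<and> prod_le leX leY z (c, d) \<and> rX (fst z) + rY (snd z) = Suc (rX a + rY b))"
proof (cases "a = c")
  case True
  then have bd: "slt leY b d" using lt unfolding slt_def prod_le_def by auto
  then obtain w where w: "w \<in> Y" "leY b w" "leY w d" "rY w = Suc (rY b)"
    using gY ab cd unfolding graded_def by blast
  have "rY b < rY d" using graded_rank_less[OF gY ab(2) cd(2) bd] .
  then show ?thesis
    using True w ab fposetD(2)[OF fX ab(1)]
    by (intro conjI bexI[of _ "(a, w)"]) (simp_all add: prod_le_def)
next
  case False
  then have ac: "slt leX a c" and bd: "leY b d" using lt unfolding slt_def prod_le_def by auto
  then obtain w where w: "w \<in> X" "leX a w" "leX w c" "rX w = Suc (rX a)"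
    using gX ab cd unfolding graded_def by blast
  have "rX a < rX c" "rY b \<le> rY d"
    using graded_rank_less[OF gX ab(1) cd(1) ac] graded_rank_mono[OF gY ab(2) cd(2) bd] .
  then show ?thesis
    using w ab bd fposetD(2)[OF fY ab(2)]
    by (intro conjI bexI[of _ "(w, b)"]) (simp_all add: prod_le_def)
qed

lemma graded_prod:
  assumes fX: "fposet X leX" and fY: "fposet Y leY"
    and gX: "graded X leX rX m" and gY: "graded Y leY rY n"
  shows "graded (X \<times> Y) (prod_le leX leY) (\<lambda>z. rX (fst z) + rY (snd z)) (m + n)"
proof -
  obtain bX tX where bX: "bX \<in> X" "rX bX = 0" "\<forall>x\<in>X. leX bX x"
    and tX: "tX \<in> X" "rX tX = m" "\<forall>x\<in>X. leX x tX"
    using gX unfolding graded_def by blast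
  obtain bY tY where bY: "bY \<in> Y" "rY bY = 0" "\<forall>y\<in>Y. leY bY y"
    and tY: "tY \<in> Y" "rY tY = n" "\<forall>y\<in>Y. leY y tY"
    using gY unfolding graded_def by blast
  note step = graded_prod_step[OF fX fY gX gY]
  show ?thesis
    unfolding graded_def
  proof (intro conjI)
    show "\<forall>z\<in>X \<times> Y. rX (fst z) + rY (snd z) \<le> m + n"
      using gX gY unfolding graded_def by (auto intro: add_mono)
    show "\<forall>p\<in>X \<times> Y. \<forall>q\<in>X \<times> Y. slt (prod_le leX leY) p q \<longrightarrow>
            rX (fst p) + rY (snd p) < rX (fst q) + rY (snd q)"
      and "\<forall>p\<in>X \<times> Y. \<forall>q\<in>X \<times> Y. slt (prod_le leX leY) p q \<longrightarrow>
            (\<exists>z\<in>X \<times> Y. prod_le leX leY p z \<and> prod_le leX leY z q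
               \<and> rX (fst z) + rY (snd z) = Suc (rX (fst p) + rY (snd p)))"
      using step by auto
    show "\<exists>b\<in>X \<times> Y. rX (fst b) + rY (snd b) = 0 \<and> (\<forall>z\<in>X \<times> Y. prod_le leX leY b z)"
      using bX bY by (intro bexI[of _ "(bX, bY)"]) (auto simp: prod_le_def)
    show "\<exists>t\<in>X \<times> Y. rX (fst t) + rY (snd t) = m + n \<and> (\<forall>z\<in>X \<times> Y. prod_le leX leY z t)"
      using tX tY by (intro bexI[of _ "(tX, tY)"]) (auto simp: prod_le_def)
  qed
qed

subsection \<open>Counting chains and multichains\<close>

(* chain_cnt R X k x counts the sequences x_0 R x_1 R ... R x_k = x in X, and chain_wt R X g k x
   sums g x_0 + ... + g x_k over them. For R = slt le these are strict chains, for R = le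
   multichains. *)

fun chain_cnt :: "('a \<Rightarrow> 'a \<Rightarrow> bool) \<Rightarrow> 'a set \<Rightarrow> nat \<Rightarrow> 'a \<Rightarrow> real" where
  "chain_cnt R X 0 x = 1"
| "chain_cnt R X (Suc k) x = (\<Sum>y\<in>{y\<in>X. R y x}. chain_cnt R X k y)"

fun chain_wt :: "('a \<Rightarrow> 'a \<Rightarrow> bool) \<Rightarrow> 'a set \<Rightarrow> ('a \<Rightarrow> real) \<Rightarrow> nat \<Rightarrow> 'a \<Rightarrow> real" where
  "chain_wt R X g 0 x = g x"
| "chain_wt R X g (Suc k) x =
     (\<Sum>y\<in>{y\<in>X. R y x}. chain_wt R X g k y) + g x * chain_cnt R X (Suc k) x"

declare chain_cnt.simps(2) [simp del] chain_wt.simps(2) [simp del]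

lemma binomial_sum_pascal:
  "(\<Sum>j\<le>k. real (k choose j) * (a (Suc j) + a j)) = (\<Sum>j\<le>Suc k. real (Suc k choose j) * a j)"
proof -
  have "(\<Sum>j\<le>Suc k. real (Suc k choose j) * a j) = a 0 + (\<Sum>j\<le>k. real (Suc k choose Suc j) * a (Suc j))"
    by (subst sum.atMost_Suc_shift) simp
  also have "(\<Sum>j\<le>k. real (Suc k choose Suc j) * a (Suc j))
      = (\<Sum>j\<le>k. real (k choose j) * a (Suc j)) + (\<Sum>j\<le>k. real (k choose Suc j) * a (Suc j))"
    by (simp add: sum.distrib algebra_simps)
  also have "a 0 + (\<Sum>j\<le>k. real (k choose Suc j) * a (Suc j)) = (\<Sum>j\<le>k. real (k choose j) * a j)"
    using sum.atMost_Suc_shift[of "\<lambda>j. real (k choose j) * a j" k] by (simp add: binomial_eq_0)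
  ultimately show ?thesis by (simp add: sum.distrib algebra_simps)
qed

lemma binomial_sum_pascal_Suc:
  "w 0 + (\<Sum>j\<le>k. real (Suc k choose Suc j) * (w j + w (Suc j)))
     = (\<Sum>j\<le>Suc k. real (Suc (Suc k) choose Suc j) * w j)"
proof -
  have "(\<Sum>j\<le>Suc k. real (Suc (Suc k) choose Suc j) * w j)
      = (\<Sum>j\<le>Suc k. real (Suc k choose Suc j) * w j) + (\<Sum>j\<le>Suc k. real (Suc k choose j) * w j)"
    by (simp only: binomial_Suc_Suc of_nat_add distrib_right sum.distrib)
  also have "(\<Sum>j\<le>Suc k. real (Suc k choose Suc j) * w j) = (\<Sum>j\<le>k. real (Suc k choose Suc j) * w j)"
    by (simp del: binomial_Suc_Suc add: binomial_eq_0)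
  also have "(\<Sum>j\<le>Suc k. real (Suc k choose j) * w j) = w 0 + (\<Sum>j\<le>k. real (Suc k choose Suc j) * w (Suc j))"
    by (subst sum.atMost_Suc_shift) simp
  finally show ?thesis by (simp add: sum.distrib algebra_simps)
qed

lemma below_eq_insert_strictly_below:
  assumes "fposet X le" "x \<in> X"
  shows "{y\<in>X. le y x} = insert x {y\<in>X. slt le y x}" "x \<notin> {y\<in>X. slt le y x}"
    "finite {y\<in>X. slt le y x}"
  using fposetD(1,2)[OF assms(1)] assms(2) by (auto simp: slt_def)

lemma chain_cnt_le:
  assumes fp: "fposet X le" and "x \<in> X"
  shows "chain_cnt le X k x = (\<Sum>j\<le>k. real (k choose j) * chain_cnt (slt le) X j x)"
  using assms(2)
proof (induction k arbitrary: x)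
  case (Suc k)
  let ?N = "\<lambda>j. chain_cnt (slt le) X j x"
  note below = below_eq_insert_strictly_below[OF fp Suc.prems]
  have "chain_cnt le X (Suc k) x = chain_cnt le X k x + (\<Sum>y | y \<in> X \<and> slt le y x. chain_cnt le X k y)"
    by (simp add: chain_cnt.simps(2) below(1) sum.insert[OF below(3,2)])
  also have "(\<Sum>y | y \<in> X \<and> slt le y x. chain_cnt le X k y) = (\<Sum>j\<le>k. real (k choose j) * ?N (Suc j))"
    using Suc.IH by (simp add: chain_cnt.simps(2) sum_distrib_left sum.swap[of _ "{..k}"])
  finally show ?case
    using Suc.IH[OF Suc.prems] binomial_sum_pascal[of k ?N] by (simp add: sum.distrib distrib_left)
qed simp

lemma chain_wt_le:
  assumes fp: "fposet X le" and "x \<in> X"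
  shows "chain_wt le X g k x = (\<Sum>j\<le>k. real (Suc k choose Suc j) * chain_wt (slt le) X g j x)"
  using assms(2)
proof (induction k arbitrary: x)
  case (Suc k)
  let ?W = "\<lambda>j. chain_wt (slt le) X g j x" and ?N = "\<lambda>j. chain_cnt (slt le) X j x"
  note below = below_eq_insert_strictly_below[OF fp Suc.prems]
  have below_wt: "(\<Sum>y | y \<in> X \<and> slt le y x. chain_wt (slt le) X g j y) = ?W (Suc j) - g x * ?N (Suc j)" for j
    by (simp add: chain_wt.simps(2))
  have "chain_wt le X g (Suc k) x
      = chain_wt le X g k x + (\<Sum>y | y \<in> X \<and> slt le y x. chain_wt le X g k y) + g x * chain_cnt le X (Suc k) x"
    by (simp add: chain_wt.simps(2) below(1) sum.insert[OF below(3,2)])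
  also have "(\<Sum>y | y \<in> X \<and> slt le y x. chain_wt le X g k y)
      = (\<Sum>j\<le>k. real (Suc k choose Suc j) * (?W (Suc j) - g x * ?N (Suc j)))"
    using Suc.IH by (simp add: below_wt sum_distrib_left sum.swap[of _ "{..k}"] flip: below_wt)
  also have "chain_cnt le X (Suc k) x = ?N 0 + (\<Sum>j\<le>k. real (Suc k choose Suc j) * ?N (Suc j))"
    unfolding chain_cnt_le[OF fp Suc.prems] by (subst sum.atMost_Suc_shift) simp
  finally have "chain_wt le X g (Suc k) x = ?W 0 + (\<Sum>j\<le>k. real (Suc k choose Suc j) * (?W j + ?W (Suc j)))"
    using Suc.IH[OF Suc.prems] by (simp add: sum.distrib sum_subtractf sum_distrib_left algebra_simps)
  then show ?case using binomial_sum_pascal_Suc[of ?W k] by simp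
qed simp

lemma sum_product_fst_snd:
  fixes f :: "'a \<Rightarrow> real" and g :: "'b \<Rightarrow> real"
  shows "(\<Sum>z\<in>A \<times> B. f (fst z) * g (snd z)) = sum f A * sum g B"
  by (simp add: sum_product sum.cartesian_product case_prod_beta')

lemma prod_le_below_eq: "{z \<in> X \<times> Y. prod_le leX leY z (x, y)} = {a\<in>X. leX a x} \<times> {b\<in>Y. leY b y}"
  by (auto simp: prod_le_def)

lemma chain_cnt_prod:
  assumes "x \<in> X" "y \<in> Y"
  shows "chain_cnt (prod_le leX leY) (X \<times> Y) k (x, y) = chain_cnt leX X k x * chain_cnt leY Y k y"
  using assms
proof (induction k arbitrary: x y)
  case (Suc k)
  have "chain_cnt (prod_le leX leY) (X \<times> Y) (Suc k) (x, y)
      = (\<Sum>z\<in>{a\<in>X. leX a x} \<times> {b\<in>Y. leY b y}. chain_cnt leX X k (fst z) * chain_cnt leY Y k (snd z))"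
    using Suc.IH by (auto simp: chain_cnt.simps(2) prod_le_below_eq intro: sum.cong)
  then show ?case by (simp add: sum_product_fst_snd chain_cnt.simps(2))
qed simp

lemma chain_wt_prod:
  assumes "x \<in> X" "y \<in> Y"
  shows "chain_wt (prod_le leX leY) (X \<times> Y) (\<lambda>z. gX (fst z) + gY (snd z)) k (x, y)
     = chain_wt leX X gX k x * chain_cnt leY Y k y + chain_cnt leX X k x * chain_wt leY Y gY k y"
  using assms
proof (induction k arbitrary: x y)
  case (Suc k)
  define A where "A = {a\<in>X. leX a x}"
  define B where "B = {b\<in>Y. leY b y}"
  have "(\<Sum>z\<in>A \<times> B. chain_wt (prod_le leX leY) (X \<times> Y) (\<lambda>z. gX (fst z) + gY (snd z)) k z)
      = (\<Sum>z\<in>A \<times> B. chain_wt leX X gX k (fst z) * chain_cnt leY Y k (snd z)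
                     + chain_cnt leX X k (fst z) * chain_wt leY Y gY k (snd z))"
    using Suc.IH unfolding A_def B_def by (intro sum.cong) auto
  also have "\<dots> = sum (chain_wt leX X gX k) A * sum (chain_cnt leY Y k) B
                 + sum (chain_cnt leX X k) A * sum (chain_wt leY Y gY k) B"
    by (simp only: sum.distrib sum_product_fst_snd)
  finally show ?case
    using chain_cnt_prod[OF Suc.prems, of leX leY "Suc k"]
    by (simp add: chain_wt.simps(2) chain_cnt.simps(2) prod_le_below_eq sum.distrib
        sum_product_fst_snd algebra_simps flip: A_def B_def)
qed simp

lemma sorted_wrt_last: "sorted_wrt R L \<Longrightarrow> a \<in> set L \<Longrightarrow> a \<noteq> last L \<Longrightarrow> R a (last L)"
  by (induction L) (auto simp: last_in_set)

definition kchains_ending :: "'a set \<Rightarrow> ('a \<Rightarrow> 'a \<Rightarrow> bool) \<Rightarrow> nat \<Rightarrow> 'a \<Rightarrow> 'a list set" where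
  "kchains_ending X le j x = {L \<in> kchains X le j. last L = x}"

lemma kchains_ending_0: "x \<in> X \<Longrightarrow> kchains_ending X le 0 x = {[x]}"
  unfolding kchains_ending_def kchains_def by (auto simp: length_Suc_conv)

lemma kchains_ending_Suc:
  assumes fp: "fposet X le" and x: "x \<in> X"
  shows "kchains_ending X le (Suc j) x
           = (\<lambda>L. L @ [x]) ` (\<Union>y\<in>{y\<in>X. slt le y x}. kchains_ending X le j y)"
proof (intro equalityI subsetI)
  fix L assume L: "L \<in> kchains_ending X le (Suc j) x"
  then have "L \<noteq> []" unfolding kchains_ending_def kchains_def by auto
  define L' where "L' = butlast L"
  have L': "L = L' @ [x]"
    using append_butlast_last_id[OF \<open>L \<noteq> []\<close>] L unfolding L'_def kchains_ending_def by simp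
  then have "L' \<noteq> []" using L unfolding kchains_ending_def kchains_def by auto
  then have "last L' \<in> set L'" by simp
  then show "L \<in> (\<lambda>L. L @ [x]) ` (\<Union>y\<in>{y\<in>X. slt le y x}. kchains_ending X le j y)"
    using L L' unfolding kchains_ending_def kchains_def
    by (intro image_eqI[where x = L'] UN_I[of "last L'"]) (auto simp: sorted_wrt_append)
next
  fix L assume "L \<in> (\<lambda>L. L @ [x]) ` (\<Union>y\<in>{y\<in>X. slt le y x}. kchains_ending X le j y)"
  then obtain y L' where y: "y \<in> X" "slt le y x" and L': "L' \<in> kchains_ending X le j y"
    and L: "L = L' @ [x]" by blast
  have "slt le a x" if a: "a \<in> set L'" for a
  proof -
    have aX: "a \<in> X" using a L' unfolding kchains_ending_def kchains_def by auto
    have "le a y"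
    proof (cases "a = y")
      case False
      then show ?thesis
        using sorted_wrt_last[OF kchainsD(3) a] L' unfolding kchains_ending_def slt_def by blast
    qed (use fposetD(2)[OF fp aX] in simp)
    then show ?thesis
      using y fposetD(4)[OF fp aX y(1) x] fposetD(3)[OF fp y(1) aX] unfolding slt_def by blast
  qed
  then show "L \<in> kchains_ending X le (Suc j) x"
    using L' L x unfolding kchains_ending_def kchains_def by (auto simp: sorted_wrt_append)
qed

lemma kchains_ending_finite_disjoint:
  assumes "finite X"
  shows "finite (kchains_ending X le j x)"
    and "x \<noteq> y \<Longrightarrow> kchains_ending X le j x \<inter> kchains_ending X le j y = {}"
  using finite_kchains[OF assms] unfolding kchains_ending_def by auto

lemma card_kchains_ending:
  assumes fp: "fposet X le" and "x \<in> X"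
  shows "real (card (kchains_ending X le j x)) = chain_cnt (slt le) X j x"
  using assms(2)
proof (induction j arbitrary: x)
  case (Suc j)
  let ?Y = "{y\<in>X. slt le y x}"
  have "real (card (kchains_ending X le (Suc j) x)) = (\<Sum>y\<in>?Y. real (card (kchains_ending X le j y)))"
    using fposetD(1)[OF fp] kchains_ending_finite_disjoint[OF fposetD(1)[OF fp]]
    by (simp add: kchains_ending_Suc[OF fp Suc.prems] card_image inj_on_def card_UN_disjoint)
  then show ?case using Suc.IH by (simp add: chain_cnt.simps(2))
qed (simp add: kchains_ending_0)

lemma sum_kchains_ending:
  assumes fp: "fposet X le" and "x \<in> X"
  shows "(\<Sum>L\<in>kchains_ending X le j x. sum_list (map g L)) = chain_wt (slt le) X g j x"
  using assms(2)
proof (induction j arbitrary: x)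
  case (Suc j)
  let ?Y = "{y\<in>X. slt le y x}"
  have "(\<Sum>L\<in>kchains_ending X le (Suc j) x. sum_list (map g L))
      = (\<Sum>y\<in>?Y. \<Sum>L\<in>kchains_ending X le j y. sum_list (map g L) + g x)"
    using fposetD(1)[OF fp] kchains_ending_finite_disjoint[OF fposetD(1)[OF fp]]
    by (simp add: kchains_ending_Suc[OF fp Suc.prems] sum.reindex inj_on_def sum.UNION_disjoint)
  also have "\<dots> = (\<Sum>y\<in>?Y. chain_wt (slt le) X g j y + g x * chain_cnt (slt le) X j y)"
    using Suc.IH card_kchains_ending[OF fp] by (simp add: sum.distrib mult.commute)
  finally show ?case
    by (simp add: chain_wt.simps(2) chain_cnt.simps(2) sum.distrib sum_distrib_left)
qed (simp add: kchains_ending_0)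

lemma kchains_eq_UN_kchains_ending: "kchains X le j = (\<Union>x\<in>X. kchains_ending X le j x)"
proof -
  have "last L \<in> X" if "L \<in> kchains X le j" for L
    using that kchainsD(1,2)[OF that] last_in_set[of L] by fastforce
  then show ?thesis unfolding kchains_ending_def by blast
qed

definition chain_sum :: "'a set \<Rightarrow> ('a \<Rightarrow> 'a \<Rightarrow> bool) \<Rightarrow> nat \<Rightarrow> ('a \<Rightarrow> real) \<Rightarrow> real" where
  "chain_sum X le j g = (\<Sum>L\<in>kchains X le j. sum_list (map g L))"

lemma chain_sum_cong:
  assumes "\<forall>x\<in>X. f x = g x"
  shows "chain_sum X le j f = chain_sum X le j g"
  unfolding chain_sum_def
proof (intro sum.cong refl arg_cong[where f = sum_list] map_cong)
  fix L x assume "L \<in> kchains X le j" "x \<in> set L"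
  then show "f x = g x" using assms kchainsD(2) by blast
qed

lemma chain_sum_eq_0_if_gt_chain_length:
  "fposet X le \<Longrightarrow> chain_length X le < j \<Longrightarrow> chain_sum X le j g = 0"
  unfolding chain_sum_def by (simp add: kchains_eq_empty_if_gt_chain_length)

lemma chain_sum_eq_sum_chain_wt:
  assumes fp: "fposet X le"
  shows "chain_sum X le j g = (\<Sum>x\<in>X. chain_wt (slt le) X g j x)"
  using kchains_ending_finite_disjoint[OF fposetD(1)[OF fp]] fposetD(1)[OF fp]
  by (simp add: chain_sum_def kchains_eq_UN_kchains_ending sum.UNION_disjoint sum_kchains_ending[OF fp])

lemma card_kchains_eq_sum_chain_cnt:
  assumes fp: "fposet X le"
  shows "real (card (kchains X le j)) = (\<Sum>x\<in>X. chain_cnt (slt le) X j x)"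
  using kchains_ending_finite_disjoint[OF fposetD(1)[OF fp]] fposetD(1)[OF fp]
  by (simp add: kchains_eq_UN_kchains_ending card_UN_disjoint card_kchains_ending[OF fp])

definition multichain_sum :: "'a set \<Rightarrow> ('a \<Rightarrow> 'a \<Rightarrow> bool) \<Rightarrow> ('a \<Rightarrow> real) \<Rightarrow> nat \<Rightarrow> real" where
  "multichain_sum X le g k = (\<Sum>x\<in>X. chain_wt le X g k x)"

definition multichain_count :: "'a set \<Rightarrow> ('a \<Rightarrow> 'a \<Rightarrow> bool) \<Rightarrow> nat \<Rightarrow> real" where
  "multichain_count X le k = (\<Sum>x\<in>X. chain_cnt le X k x)"

lemma multichain_sum_eq:
  "fposet X le \<Longrightarrow> multichain_sum X le g k = (\<Sum>j\<le>k. real (Suc k choose Suc j) * chain_sum X le j g)"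
  unfolding multichain_sum_def
  by (simp add: chain_wt_le chain_sum_eq_sum_chain_wt sum_distrib_left cong: sum.cong)
    (rule sum.swap)

lemma multichain_count_eq:
  "fposet X le \<Longrightarrow> multichain_count X le k = (\<Sum>j\<le>k. real (k choose j) * real (card (kchains X le j)))"
  unfolding multichain_count_def
  by (simp add: chain_cnt_le card_kchains_eq_sum_chain_cnt sum_distrib_left cong: sum.cong)
    (rule sum.swap)

lemma multichain_sum_prod:
  "multichain_sum (X \<times> Y) (prod_le leX leY) (\<lambda>z. gX (fst z) + gY (snd z)) k
     = multichain_sum X leX gX k * multichain_count Y leY k
       + multichain_count X leX k * multichain_sum Y leY gY k"
proof -
  have "(\<Sum>z\<in>X \<times> Y. chain_wt (prod_le leX leY) (X \<times> Y) (\<lambda>z. gX (fst z) + gY (snd z)) k z)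
      = (\<Sum>z\<in>X \<times> Y. chain_wt leX X gX k (fst z) * chain_cnt leY Y k (snd z)
                      + chain_cnt leX X k (fst z) * chain_wt leY Y gY k (snd z))"
    by (intro sum.cong) (auto simp: chain_wt_prod)
  then show ?thesis
    unfolding multichain_sum_def multichain_count_def by (simp only: sum.distrib sum_product_fst_snd)
qed

lemma sum_mult_card_eq_sum_sum:
  fixes f :: "'a \<Rightarrow> real"
  assumes "finite X" "finite F" and "\<forall>c\<in>F. A c \<subseteq> X"
  shows "(\<Sum>x\<in>X. f x * real (card {c\<in>F. x \<in> A c})) = (\<Sum>c\<in>F. \<Sum>x\<in>A c. f x)"
proof -
  have "(\<Sum>x\<in>X. f x * real (card {c\<in>F. x \<in> A c})) = (\<Sum>x\<in>X. \<Sum>c\<in>F. if x \<in> A c then f x else 0)"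
    by (intro sum.cong refl) (simp add: sum.inter_filter[OF assms(2), symmetric])
  also have "\<dots> = (\<Sum>c\<in>F. \<Sum>x\<in>X. if x \<in> A c then f x else 0)" by (rule sum.swap)
  also have "\<dots> = (\<Sum>c\<in>F. \<Sum>x\<in>A c. f x)"
  proof (rule sum.cong[OF refl])
    fix c assume "c \<in> F"
    then have "{x\<in>X. x \<in> A c} = A c" using assms(3) by blast
    then show "(\<Sum>x\<in>X. if x \<in> A c then f x else 0) = (\<Sum>x\<in>A c. f x)"
      by (simp add: sum.inter_filter[OF assms(1), symmetric])
  qed
  finally show ?thesis .
qed

lemma sum_over_kchains_eq_chain_sum:
  assumes fp: "fposet X le"
  shows "(\<Sum>L\<in>kchains X le k. \<Sum>x\<in>set L. f x) = chain_sum X le k f"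
  unfolding chain_sum_def by (intro sum.cong refl) (simp add: kchainsD(4) sum_list_distinct_conv_sum_set)

lemma E_chain_ddeg_eq:
  assumes fp: "fposet X le"
  shows "E_chain_ddeg X le k
           = chain_sum X le k (\<lambda>x. real (ddeg X le x)) / (real (Suc k) * real (card (kchains X le k)))"
proof -
  have "E_chain_ddeg X le k = (\<Sum>x\<in>X. real (ddeg X le x) * real (card {L \<in> kchains X le k. x \<in> set L}))
          / (real (Suc k) * real (card (kchains X le k)))"
    unfolding E_chain_ddeg_def by (simp add: sum_divide_distrib)
  also have "(\<Sum>x\<in>X. real (ddeg X le x) * real (card {L \<in> kchains X le k. x \<in> set L}))
      = chain_sum X le k (\<lambda>x. real (ddeg X le x))"
    using fposetD(1)[OF fp] finite_kchains[OF fposetD(1)[OF fp]] kchainsD(2)[of _ X le k]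
    by (subst sum_mult_card_eq_sum_sum) (simp_all add: sum_over_kchains_eq_chain_sum[OF fp])
  finally show ?thesis .
qed

lemma E_maxchain_ddeg_graded:
  assumes fp: "fposet X le" and g: "graded X le r m"
  shows "E_maxchain_ddeg X le = E_chain_ddeg X le m"
proof -
  have finX: "finite X" and finK: "finite (kchains X le m)"
    using fposetD(1)[OF fp] finite_kchains by blast+
  have count: "(\<Sum>x\<in>X. f x * real (card {C \<in> maxchains X le. x \<in> C})) = chain_sum X le m f" for f
  proof -
    have "(\<Sum>x\<in>X. f x * real (card {C \<in> maxchains X le. x \<in> C})) = (\<Sum>C\<in>maxchains X le. \<Sum>x\<in>C. f x)"
      using finX finK kchainsD(2)[of _ X le m] maxchains_graded[OF fp g]
      by (intro sum_mult_card_eq_sum_sum) auto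
    also have "\<dots> = (\<Sum>L\<in>kchains X le m. \<Sum>x\<in>set L. f x)"
      unfolding maxchains_graded[OF fp g] by (simp add: sum.reindex inj_on_set_kchains[OF fp])
    finally show ?thesis by (simp add: sum_over_kchains_eq_chain_sum[OF fp])
  qed
  have "chain_sum X le m (\<lambda>x. 1) = real (Suc m) * real (card (kchains X le m))"
    unfolding chain_sum_def by (simp add: kchainsD(1) sum_list_triv)
  then show ?thesis
    using count[of "\<lambda>x. real (ddeg X le x)"] count[of "\<lambda>x. 1"]
    unfolding E_maxchain_ddeg_def E_chain_ddeg_eq[OF fp] by (simp add: times_divide_eq_right flip: sum_divide_distrib)
qed

definition centered_ddeg :: "'a set \<Rightarrow> ('a \<Rightarrow> 'a \<Rightarrow> bool) \<Rightarrow> 'a \<Rightarrow> real" where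
  "centered_ddeg X le x = real (ddeg X le x) - E_uni_ddeg X le"

lemma E_chain_ddeg_eq_E_uni_iff:
  assumes fp: "fposet X le" and ne: "kchains X le k \<noteq> {}"
  shows "E_chain_ddeg X le k = E_uni_ddeg X le \<longleftrightarrow> chain_sum X le k (centered_ddeg X le) = 0"
proof -
  define D where "D = real (Suc k) * real (card (kchains X le k))"
  have "D \<noteq> 0" using ne finite_kchains[OF fposetD(1)[OF fp]] unfolding D_def by simp
  moreover have "chain_sum X le k (centered_ddeg X le)
      = chain_sum X le k (\<lambda>x. real (ddeg X le x)) - E_uni_ddeg X le * D"
    unfolding chain_sum_def centered_ddeg_def D_def
    by (simp add: sum_list_subtractf kchainsD(1) sum_list_triv sum_subtractf sum_distrib_left)
  ultimately show ?thesis unfolding E_chain_ddeg_eq[OF fp] D_def[symmetric] by (auto simp: field_simps)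
qed

lemma mCDE_iff_chain_sum:
  assumes fp: "fposet X le" and "X \<noteq> {}"
  shows "mCDE X le \<longleftrightarrow> (\<forall>j. chain_sum X le j (centered_ddeg X le) = 0)"
  unfolding mCDE_def
  using E_chain_ddeg_eq_E_uni_iff[OF fp kchains_nonempty[OF fp assms(2)]]
    chain_sum_eq_0_if_gt_chain_length[OF fp]
  by (meson not_le)

lemma CDE_iff_chain_sum:
  assumes fp: "fposet X le" and g: "graded X le r m"
  shows "CDE X le \<longleftrightarrow> chain_sum X le m (centered_ddeg X le) = 0"
proof -
  have "X \<noteq> {}" using g unfolding graded_def by blast
  then have "kchains X le m \<noteq> {}" using kchains_nonempty[OF fp] chain_length_graded[OF fp g] by simp
  then show ?thesis
    unfolding CDE_def E_maxchain_ddeg_graded[OF fp g] by (rule E_chain_ddeg_eq_E_uni_iff[OF fp])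
qed

lemma covers_prod_same_snd:
  assumes fY: "fposet Y leY" and b: "b \<in> Y"
  shows "covers (X \<times> Y) (prod_le leX leY) (a, b) (x, b) \<longleftrightarrow> covers X leX a x"
  using fposetD(2)[OF fY b] fposetD(3)[OF fY b] b unfolding covers_def slt_def prod_le_def
  by auto

lemma covers_prod_same_fst:
  assumes fX: "fposet X leX" and a: "a \<in> X"
  shows "covers (X \<times> Y) (prod_le leX leY) (a, b) (a, y) \<longleftrightarrow> covers Y leY b y"
  using fposetD(2)[OF fX a] fposetD(3)[OF fX a] a unfolding covers_def slt_def prod_le_def
  by auto

lemma covers_prod_fst_or_snd_eq:
  assumes fX: "fposet X leX" and fY: "fposet Y leY"
    and cov: "covers (X \<times> Y) (prod_le leX leY) (a, b) (x, y)"
  shows "a = x \<or> b = y"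
proof (rule ccontr)
  assume ne: "\<not> (a = x \<or> b = y)"
  have "a \<in> X" "y \<in> Y" "leX a x" "leY b y" using cov unfolding covers_def slt_def prod_le_def by auto
  then have "slt (prod_le leX leY) (a, b) (a, y)" "slt (prod_le leX leY) (a, y) (x, y)"
    using ne fposetD(2)[OF fX] fposetD(2)[OF fY] unfolding slt_def prod_le_def by auto
  then show False using cov \<open>a \<in> X\<close> \<open>y \<in> Y\<close> unfolding covers_def by blast
qed

lemma ddeg_prod:
  assumes fX: "fposet X leX" and fY: "fposet Y leY" and x: "x \<in> X" and y: "y \<in> Y"
  shows "ddeg (X \<times> Y) (prod_le leX leY) (x, y) = ddeg X leX x + ddeg Y leY y"
proof -
  have "{z \<in> X \<times> Y. covers (X \<times> Y) (prod_le leX leY) z (x, y)}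
      = ({a\<in>X. covers X leX a x} \<times> {y}) \<union> ({x} \<times> {b\<in>Y. covers Y leY b y})"
    using covers_prod_fst_or_snd_eq[OF fX fY] covers_prod_same_snd[OF fY y]
      covers_prod_same_fst[OF fX x] x y by fastforce
  moreover have "({a\<in>X. covers X leX a x} \<times> {y}) \<inter> ({x} \<times> {b\<in>Y. covers Y leY b y}) = {}"
    unfolding covers_def slt_def by auto
  ultimately show ?thesis
    using fposetD(1)[OF fX] fposetD(1)[OF fY]
    unfolding ddeg_def by (simp add: card_Un_disjoint card_cartesian_product)
qed

lemma E_uni_ddeg_prod:
  assumes fX: "fposet X leX" "X \<noteq> {}" and fY: "fposet Y leY" "Y \<noteq> {}"
  shows "E_uni_ddeg (X \<times> Y) (prod_le leX leY) = E_uni_ddeg X leX + E_uni_ddeg Y leY"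
proof -
  have pos: "card X > 0" "card Y > 0" using fX fY fposetD(1) by (auto simp: card_gt_0_iff)
  have "(\<Sum>z\<in>X \<times> Y. real (ddeg (X \<times> Y) (prod_le leX leY) z))
      = (\<Sum>z\<in>X \<times> Y. real (ddeg X leX (fst z)) + real (ddeg Y leY (snd z)))"
    using ddeg_prod[OF fX(1) fY(1)] by (intro sum.cong) auto
  also have "\<dots> = (\<Sum>x\<in>X. real (ddeg X leX x)) * real (card Y) + real (card X) * (\<Sum>y\<in>Y. real (ddeg Y leY y))"
    using sum_product_fst_snd[of "\<lambda>x. real (ddeg X leX x)" "\<lambda>_. 1" X Y]
      sum_product_fst_snd[of "\<lambda>_. 1" "\<lambda>y. real (ddeg Y leY y)" X Y]
    by (simp add: sum.distrib)
  finally show ?thesis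
    using pos unfolding E_uni_ddeg_def card_cartesian_product by (simp add: field_simps)
qed

lemma centered_ddeg_prod:
  assumes "fposet X leX" "X \<noteq> {}" "fposet Y leY" "Y \<noteq> {}" and "z \<in> X \<times> Y"
  shows "centered_ddeg (X \<times> Y) (prod_le leX leY) z = centered_ddeg X leX (fst z) + centered_ddeg Y leY (snd z)"
proof -
  obtain x y where "z = (x, y)" "x \<in> X" "y \<in> Y" using assms(5) by auto
  then show ?thesis
    using ddeg_prod[OF assms(1,3)] E_uni_ddeg_prod[OF assms(1-4)] unfolding centered_ddeg_def by simp
qed

subsection \<open>Polynomially bounded sequences\<close>

definition poly_bounded :: "(nat \<Rightarrow> real) \<Rightarrow> nat \<Rightarrow> bool" where
  "poly_bounded f d \<longleftrightarrow> (\<exists>c. \<forall>k. \<bar>f k\<bar> \<le> c * real (Suc k) ^ d)"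

lemma poly_bounded_add:
  assumes "poly_bounded f d" "poly_bounded g d"
  shows "poly_bounded (\<lambda>k. f k + g k) d"
proof -
  obtain a b where ab: "\<forall>k. \<bar>f k\<bar> \<le> a * real (Suc k) ^ d" "\<forall>k. \<bar>g k\<bar> \<le> b * real (Suc k) ^ d"
    using assms unfolding poly_bounded_def by blast
  have "\<bar>f k + g k\<bar> \<le> (a + b) * real (Suc k) ^ d" for k
  proof -
    have "\<bar>f k + g k\<bar> \<le> \<bar>f k\<bar> + \<bar>g k\<bar>" by (rule abs_triangle_ineq)
    also have "\<dots> \<le> a * real (Suc k) ^ d + b * real (Suc k) ^ d" using ab by (intro add_mono) auto
    finally show ?thesis by (simp add: distrib_right)
  qed
  then show ?thesis unfolding poly_bounded_def by blast
qed

lemma poly_bounded_diff: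
  assumes "poly_bounded f d" "poly_bounded g d"
  shows "poly_bounded (\<lambda>k. f k - g k) d"
  using poly_bounded_add[OF assms(1), of "\<lambda>k. - g k"] assms(2) unfolding poly_bounded_def by simp

lemma poly_bounded_mult:
  assumes "poly_bounded f a" "poly_bounded g b"
  shows "poly_bounded (\<lambda>k. f k * g k) (a + b)"
proof -
  obtain c e where c: "\<forall>k. \<bar>f k\<bar> \<le> c * real (Suc k) ^ a" and e: "\<forall>k. \<bar>g k\<bar> \<le> e * real (Suc k) ^ b"
    using assms unfolding poly_bounded_def by blast
  have "\<bar>f k * g k\<bar> \<le> (c * e) * real (Suc k) ^ (a + b)" for k
  proof -
    have "0 \<le> c * real (Suc k) ^ a" using c abs_ge_zero order_trans by blast
    then have "\<bar>f k\<bar> * \<bar>g k\<bar> \<le> (c * real (Suc k) ^ a) * (e * real (Suc k) ^ b)"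
      using c e by (simp add: mult_mono)
    then show ?thesis by (simp add: abs_mult power_add algebra_simps)
  qed
  then show ?thesis unfolding poly_bounded_def by blast
qed

lemma poly_bounded_sum_finite_support:
  fixes t :: "nat \<Rightarrow> real"
  assumes "finite J" "\<forall>j. j \<notin> J \<longrightarrow> t j = 0" "\<forall>k. \<forall>j\<in>J. \<bar>c k j\<bar> \<le> real (Suc k) ^ d"
  shows "poly_bounded (\<lambda>k. \<Sum>j\<le>k. c k j * t j) d"
  unfolding poly_bounded_def
proof (intro exI allI)
  fix k
  have "(\<Sum>j\<le>k. c k j * t j) = (\<Sum>j\<in>{..k} \<inter> J. c k j * t j)"
    using assms(2) by (intro sum.mono_neutral_right) auto
  also have "\<bar>\<dots>\<bar> \<le> (\<Sum>j\<in>{..k} \<inter> J. \<bar>c k j * t j\<bar>)" by (rule sum_abs)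
  also have "\<dots> \<le> (\<Sum>j\<in>J. \<bar>c k j * t j\<bar>)" using assms(1) by (intro sum_mono2) auto
  also have "\<dots> \<le> (\<Sum>j\<in>J. real (Suc k) ^ d * \<bar>t j\<bar>)"
    using assms(3) by (intro sum_mono) (simp add: abs_mult mult_right_mono)
  finally show "\<bar>\<Sum>j\<le>k. c k j * t j\<bar> \<le> (\<Sum>j\<in>J. \<bar>t j\<bar>) * real (Suc k) ^ d"
    by (simp add: sum_distrib_right mult.commute)
qed

lemma binomial_le_pow_real: "real (n choose r) \<le> real n ^ r"
proof (cases "r \<le> n")
  case True
  then show ?thesis using binomial_le_pow by (metis of_nat_le_iff of_nat_power)
qed (simp add: binomial_eq_0)

lemma poly_bounded_binomial_sum:
  assumes "\<forall>j>n. t j = 0"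
  shows "poly_bounded (\<lambda>k. \<Sum>j\<le>k. real (k choose j) * t j) n"
proof (rule poly_bounded_sum_finite_support[of "{..n}"])
  show "\<forall>k. \<forall>j\<in>{..n}. \<bar>real (k choose j)\<bar> \<le> real (Suc k) ^ n"
  proof (intro allI ballI)
    fix k j assume "j \<in> {..n}"
    then have "real k ^ j \<le> real (Suc k) ^ n"
      using power_mono[of "real k" "real (Suc k)" j] power_increasing[of j n "real (Suc k)"] by simp
    then show "\<bar>real (k choose j)\<bar> \<le> real (Suc k) ^ n"
      using order_trans[OF binomial_le_pow_real[of k j]] by simp
  qed
qed (use assms in auto)

lemma poly_bounded_binomial_Suc_sum:
  assumes "\<forall>j\<ge>m. t j = 0"
  shows "poly_bounded (\<lambda>k. \<Sum>j\<le>k. real (Suc k choose Suc j) * t j) m"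
proof (rule poly_bounded_sum_finite_support[of "{..<m}"])
  show "\<forall>k. \<forall>j\<in>{..<m}. \<bar>real (Suc k choose Suc j)\<bar> \<le> real (Suc k) ^ m"
  proof (intro allI ballI)
    fix k j assume "j \<in> {..<m}"
    then have "real (Suc k) ^ Suc j \<le> real (Suc k) ^ m" by (intro power_increasing) auto
    then show "\<bar>real (Suc k choose Suc j)\<bar> \<le> real (Suc k) ^ m"
      using order_trans[OF binomial_le_pow_real[of "Suc k" "Suc j"]] by simp
  qed
qed (use assms in auto)

lemma poly_bounded_binomial_imp_zero:
  assumes "poly_bounded (\<lambda>k. real (Suc k choose Suc M) * a) M"
  shows "a = 0"
proof (rule ccontr)
  assume "a \<noteq> 0"
  obtain c where c: "\<forall>k. \<bar>real (Suc k choose Suc M) * a\<bar> \<le> c * real (Suc k) ^ M"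
    using assms unfolding poly_bounded_def by blast
  define S where "S = real (Suc M) ^ Suc M"
  have "S > 0" unfolding S_def by simp
  have bound: "real (Suc k) * \<bar>a\<bar> \<le> c * S" if "M \<le> k" for k
  proof -
    define K where "K = real (Suc k)"
    have "K ^ Suc M / S * \<bar>a\<bar> \<le> real (Suc k choose Suc M) * \<bar>a\<bar>"
      using binomial_ge_n_over_k_pow_k[of "Suc M" "Suc k"] that unfolding K_def S_def
      by (intro mult_right_mono) (auto simp: power_divide)
    also have "\<dots> \<le> c * K ^ M" using c unfolding K_def by (simp add: abs_mult)
    finally have "K ^ M * (K * \<bar>a\<bar>) \<le> K ^ M * (c * S)"
      using \<open>S > 0\<close> by (simp add: pos_divide_le_eq algebra_simps)
    then show ?thesis unfolding K_def by (simp add: mult_le_cancel_left_pos)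
  qed
  obtain n where "c * S / \<bar>a\<bar> < real n" using reals_Archimedean2 by blast
  moreover have "\<bar>a\<bar> > 0" using \<open>a \<noteq> 0\<close> by simp
  ultimately have "c * S < real n * \<bar>a\<bar>" by (simp add: pos_divide_less_eq)
  also have "\<dots> \<le> real (Suc (max n M)) * \<bar>a\<bar>" by (intro mult_right_mono) auto
  also have "\<dots> \<le> c * S" by (rule bound) simp
  finally show False by simp
qed

lemma binomial_Suc_sum_top_eq_0:
  fixes t :: "nat \<Rightarrow> real"
  assumes "\<forall>j>M. t j = 0" and "poly_bounded (\<lambda>k. \<Sum>j\<le>k. real (Suc k choose Suc j) * t j) M"
  shows "t M = 0"
proof (rule poly_bounded_binomial_imp_zero)
  let ?S = "\<lambda>t k. \<Sum>j\<le>k. real (Suc k choose Suc j) * t j"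
  have "poly_bounded (?S (t(M := 0))) M"
    using assms(1) by (intro poly_bounded_binomial_Suc_sum) (simp add: le_neq_implies_less)
  then have "poly_bounded (\<lambda>k. ?S t k - ?S (t(M := 0)) k) M"
    by (rule poly_bounded_diff[OF assms(2)])
  moreover have "?S t k - ?S (t(M := 0)) k = real (Suc k choose Suc M) * t M" for k
    by (simp add: sum_subtractf[symmetric] binomial_eq_0 algebra_simps if_distrib
        del: binomial_Suc_Suc cong: if_cong)
  ultimately show "poly_bounded (\<lambda>k. real (Suc k choose Suc M) * t M) M" by simp
qed

lemma chain_sum_centered_ddeg_prod:
  assumes "fposet X leX" "X \<noteq> {}" "fposet Y leY" "Y \<noteq> {}"
  shows "chain_sum (X \<times> Y) (prod_le leX leY) j (centered_ddeg (X \<times> Y) (prod_le leX leY))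
           = chain_sum (X \<times> Y) (prod_le leX leY) j (\<lambda>z. centered_ddeg X leX (fst z) + centered_ddeg Y leY (snd z))"
  using centered_ddeg_prod[OF assms] by (intro chain_sum_cong) blast

lemma binomial_Suc_sums_eq_0_imp_zero:
  fixes t :: "nat \<Rightarrow> real"
  assumes "\<forall>k. (\<Sum>j\<le>k. real (Suc k choose Suc j) * t j) = 0"
  shows "t j = 0"
proof (induction j rule: less_induct)
  case (less j)
  then have "(\<Sum>i<j. real (Suc j choose Suc i) * t i) = 0" by simp
  moreover have "(\<Sum>i\<le>j. real (Suc j choose Suc i) * t i) = t j + (\<Sum>i<j. real (Suc j choose Suc i) * t i)"
    by (simp add: lessThan_Suc_atMost[symmetric])
  ultimately show ?case using assms by simp
qed

lemma mCDE_prod: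
  assumes fX: "fposet X leX" "X \<noteq> {}" and fY: "fposet Y leY" "Y \<noteq> {}"
    and "mCDE X leX" "mCDE Y leY"
  shows "mCDE (X \<times> Y) (prod_le leX leY)"
proof -
  let ?g = "\<lambda>z. centered_ddeg X leX (fst z) + centered_ddeg Y leY (snd z)"
  have fXY: "fposet (X \<times> Y) (prod_le leX leY)" and "X \<times> Y \<noteq> {}"
    using fposet_prod[OF fX(1) fY(1)] fX fY by auto
  have "\<forall>j. chain_sum X leX j (centered_ddeg X leX) = 0" "\<forall>j. chain_sum Y leY j (centered_ddeg Y leY) = 0"
    using assms(5,6) mCDE_iff_chain_sum[OF fX] mCDE_iff_chain_sum[OF fY] by blast+
  then have "multichain_sum X leX (centered_ddeg X leX) k = 0" "multichain_sum Y leY (centered_ddeg Y leY) k = 0" for k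
    by (simp_all add: multichain_sum_eq fX(1) fY(1))
  then have "multichain_sum (X \<times> Y) (prod_le leX leY) ?g k = 0" for k
    by (simp add: multichain_sum_prod)
  then have "\<forall>k. (\<Sum>j\<le>k. real (Suc k choose Suc j) * chain_sum (X \<times> Y) (prod_le leX leY) j ?g) = 0"
    unfolding multichain_sum_eq[OF fXY] by blast
  then have "chain_sum (X \<times> Y) (prod_le leX leY) j ?g = 0" for j
    by (rule binomial_Suc_sums_eq_0_imp_zero)
  then show ?thesis
    unfolding mCDE_iff_chain_sum[OF fXY \<open>X \<times> Y \<noteq> {}\<close>] chain_sum_centered_ddeg_prod[OF fX fY] by blast
qed

lemma poly_bounded_multichain_count:
  assumes fp: "fposet X le" and g: "graded X le r m"
  shows "poly_bounded (multichain_count X le) m"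
  unfolding multichain_count_eq[OF fp, abs_def]
  by (rule poly_bounded_binomial_sum)
    (simp add: kchains_eq_empty_if_gt_chain_length[OF fp] chain_length_graded[OF fp g])

lemma poly_bounded_multichain_sum_if_CDE:
  assumes fp: "fposet X le" and g: "graded X le r m" and "CDE X le"
  shows "poly_bounded (multichain_sum X le (centered_ddeg X le)) m"
proof -
  have "\<forall>j\<ge>m. chain_sum X le j (centered_ddeg X le) = 0"
    using assms CDE_iff_chain_sum chain_sum_eq_0_if_gt_chain_length[OF fp] chain_length_graded[OF fp g]
    by (metis le_neq_implies_less)
  then show ?thesis
    unfolding multichain_sum_eq[OF fp, abs_def] by (rule poly_bounded_binomial_Suc_sum)
qed

lemma CDE_prod:
  assumes fX: "fposet X leX" "X \<noteq> {}" and fY: "fposet Y leY" "Y \<noteq> {}"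
    and gX: "graded X leX rX m" and gY: "graded Y leY rY n"
    and "CDE X leX" "CDE Y leY"
  shows "CDE (X \<times> Y) (prod_le leX leY)"
proof -
  let ?g = "\<lambda>z. centered_ddeg X leX (fst z) + centered_ddeg Y leY (snd z)"
  have fXY: "fposet (X \<times> Y) (prod_le leX leY)" using fposet_prod[OF fX(1) fY(1)] .
  note gXY = graded_prod[OF fX(1) fY(1) gX gY]
  have "poly_bounded (\<lambda>k. multichain_sum X leX (centered_ddeg X leX) k * multichain_count Y leY k) (m + n)"
    using poly_bounded_multichain_sum_if_CDE[OF fX(1) gX \<open>CDE X leX\<close>]
      poly_bounded_multichain_count[OF fY(1) gY] by (rule poly_bounded_mult)
  moreover have "poly_bounded (\<lambda>k. multichain_count X leX k * multichain_sum Y leY (centered_ddeg Y leY) k) (m + n)"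
    using poly_bounded_multichain_count[OF fX(1) gX]
      poly_bounded_multichain_sum_if_CDE[OF fY(1) gY \<open>CDE Y leY\<close>] by (rule poly_bounded_mult)
  ultimately have "poly_bounded (multichain_sum (X \<times> Y) (prod_le leX leY) ?g) (m + n)"
    unfolding multichain_sum_prod by (rule poly_bounded_add)
  moreover have "\<forall>j>m + n. chain_sum (X \<times> Y) (prod_le leX leY) j ?g = 0"
    using chain_sum_eq_0_if_gt_chain_length[OF fXY] chain_length_graded[OF fXY gXY] by simp
  ultimately have "chain_sum (X \<times> Y) (prod_le leX leY) (m + n) ?g = 0"
    unfolding multichain_sum_eq[OF fXY, abs_def] by (intro binomial_Suc_sum_top_eq_0)
  then show ?thesis
    unfolding CDE_iff_chain_sum[OF fXY gXY] chain_sum_centered_ddeg_prod[OF fX fY] .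
qed

subsection \<open>Order ideals of a disjoint union\<close>

lemma covers_iso:
  assumes bij: "bij_betw f A B" and ord: "\<forall>x\<in>A. \<forall>y\<in>A. le' (f x) (f y) \<longleftrightarrow> le x y"
    and "a \<in> A" "x \<in> A"
  shows "covers B le' (f a) (f x) \<longleftrightarrow> covers A le a x"
proof -
  have slt: "slt le' (f u) (f v) \<longleftrightarrow> slt le u v" if "u \<in> A" "v \<in> A" for u v
    using that ord bij unfolding slt_def bij_betw_def inj_on_def by blast
  have "B = f ` A" using bij by (simp add: bij_betw_def)
  then show ?thesis using assms(3,4) slt unfolding covers_def by auto
qed

lemma ddeg_iso:
  assumes bij: "bij_betw f A B" and ord: "\<forall>x\<in>A. \<forall>y\<in>A. le' (f x) (f y) \<longleftrightarrow> le x y"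
    and x: "x \<in> A"
  shows "ddeg B le' (f x) = ddeg A le x"
proof -
  have "{b\<in>B. covers B le' b (f x)} = f ` {a\<in>A. covers A le a x}"
    using covers_iso[OF bij ord _ x] bij_betw_imp_surj_on[OF bij] by auto
  moreover have "inj_on f {a\<in>A. covers A le a x}"
    using bij_betw_imp_inj_on[OF bij] by (rule inj_on_subset) auto
  ultimately show ?thesis unfolding ddeg_def by (simp add: card_image)
qed

lemma E_uni_ddeg_iso:
  assumes bij: "bij_betw f A B" and ord: "\<forall>x\<in>A. \<forall>y\<in>A. le' (f x) (f y) \<longleftrightarrow> le x y"
  shows "E_uni_ddeg B le' = E_uni_ddeg A le"
  unfolding E_uni_ddeg_def
  using sum.reindex_bij_betw[OF bij, of "\<lambda>y. real (ddeg B le' y)"] ddeg_iso[OF bij ord]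
    bij_betw_same_card[OF bij]
  by simp

lemma Plus_subset_Plus_iff: "A <+> B \<subseteq> C <+> D \<longleftrightarrow> A \<subseteq> C \<and> B \<subseteq> D"
  by (auto simp: Plus_def)

lemma vimage_Inl_Plus [simp]: "Inl -` (A <+> B) = A"
  and vimage_Inr_Plus [simp]: "Inr -` (A <+> B) = B"
  by (auto simp: Plus_def)

lemma Plus_vimage_Inl_Inr: "Inl -` J <+> Inr -` J = J"
  by (auto simp: Plus_def) (metis sum.exhaust_sel rangeI)

lemma vimage_Inl_ideal: "J \<in> ideals (P <+> Q) (sum_le leP leQ) \<Longrightarrow> Inl -` J \<in> ideals P leP"
  and vimage_Inr_ideal: "J \<in> ideals (P <+> Q) (sum_le leP leQ) \<Longrightarrow> Inr -` J \<in> ideals Q leQ"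
  unfolding ideals_def by (auto, metis InlI sum_le.simps(1), metis InrI sum_le.simps(2))

lemma Plus_ideal:
  assumes "I \<in> ideals P leP" "K \<in> ideals Q leQ"
  shows "I <+> K \<in> ideals (P <+> Q) (sum_le leP leQ)"
  using assms unfolding ideals_def Plus_def
  by (auto elim!: sum_le.elims)

lemma bij_betw_Plus_ideals:
  "bij_betw (\<lambda>z. fst z <+> snd z) (ideals P leP \<times> ideals Q leQ) (ideals (P <+> Q) (sum_le leP leQ))"
  by (rule bij_betw_byWitness[where f' = "\<lambda>J. (Inl -` J, Inr -` J)"])
    (auto simp: Plus_vimage_Inl_Inr Plus_ideal vimage_Inl_ideal vimage_Inr_ideal)

lemma ddeg_ideals_Plus:
  assumes fP: "fposet P leP" and fQ: "fposet Q leQ" and J: "J \<in> ideals (P <+> Q) (sum_le leP leQ)"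
  shows "ddeg (ideals (P <+> Q) (sum_le leP leQ)) J_le J
           = ddeg (ideals P leP) J_le (Inl -` J) + ddeg (ideals Q leQ) J_le (Inr -` J)"
proof -
  have ord: "\<forall>x\<in>ideals P leP \<times> ideals Q leQ. \<forall>y\<in>ideals P leP \<times> ideals Q leQ.
      J_le (fst x <+> snd x) (fst y <+> snd y) \<longleftrightarrow> prod_le J_le J_le x y"
    by (simp add: Plus_subset_Plus_iff prod_le_def)
  have "ddeg (ideals (P <+> Q) (sum_le leP leQ)) J_le (Inl -` J <+> Inr -` J)
      = ddeg (ideals P leP \<times> ideals Q leQ) (prod_le J_le J_le) (Inl -` J, Inr -` J)"
    using ddeg_iso[OF bij_betw_Plus_ideals ord, of "(Inl -` J, Inr -` J)"]
      vimage_Inl_ideal[OF J] vimage_Inr_ideal[OF J] by simp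
  then show ?thesis
    using ddeg_prod[OF fposet_ideals fposet_ideals vimage_Inl_ideal[OF J] vimage_Inr_ideal[OF J]]
      fposetD(1)[OF fP] fposetD(1)[OF fQ] by (simp add: Plus_vimage_Inl_Inr)
qed

lemma E_uni_ddeg_ideals_Plus:
  assumes fP: "fposet P leP" and fQ: "fposet Q leQ"
  shows "E_uni_ddeg (ideals (P <+> Q) (sum_le leP leQ)) J_le
           = E_uni_ddeg (ideals P leP) J_le + E_uni_ddeg (ideals Q leQ) J_le"
proof -
  have ord: "\<forall>x\<in>ideals P leP \<times> ideals Q leQ. \<forall>y\<in>ideals P leP \<times> ideals Q leQ.
      J_le (fst x <+> snd x) (fst y <+> snd y) \<longleftrightarrow> prod_le J_le J_le x y"
    by (simp add: Plus_subset_Plus_iff prod_le_def)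
  show ?thesis
    using E_uni_ddeg_iso[OF bij_betw_Plus_ideals ord]
      E_uni_ddeg_prod[OF fposet_ideals _ fposet_ideals] empty_in_ideals fposetD(1)[OF fP] fposetD(1)[OF fQ]
    by (metis empty_iff)
qed

lemma toggles_Plus:
  "Tplus (P <+> Q) (sum_le leP leQ) (Inl p) J = Tplus P leP p (Inl -` J)"
  "Tplus (P <+> Q) (sum_le leP leQ) (Inr q) J = Tplus Q leQ q (Inr -` J)"
  "Tminus (P <+> Q) (sum_le leP leQ) (Inl p) J = Tminus P leP p (Inl -` J)"
  "Tminus (P <+> Q) (sum_le leP leQ) (Inr q) J = Tminus Q leQ q (Inr -` J)"
  unfolding Tplus_def Tminus_def
  by (auto elim!: sum_le.elims)

definition pushforward :: "'b set \<Rightarrow> ('b \<Rightarrow> real) \<Rightarrow> ('b \<Rightarrow> 'c) \<Rightarrow> 'c \<Rightarrow> real" where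
  "pushforward S \<mu> h y = (\<Sum>x | x \<in> S \<and> h x = y. \<mu> x)"

lemma Expect_pushforward:
  assumes "finite S" "finite T" "h ` S \<subseteq> T"
  shows "Expect T (pushforward S \<mu> h) f = Expect S \<mu> (\<lambda>x. f (h x))"
proof -
  have "Expect T (pushforward S \<mu> h) f = (\<Sum>y\<in>T. \<Sum>x | x \<in> S \<and> h x = y. f (h x) * \<mu> x)"
    unfolding Expect_def pushforward_def by (simp add: sum_distrib_left)
  also have "\<dots> = Expect S \<mu> (\<lambda>x. f (h x))"
    unfolding Expect_def by (rule sum.group[OF assms])
  finally show ?thesis .
qed

lemma is_distr_pushforward:
  assumes "is_distr S \<mu>" "finite S" "finite T" "h ` S \<subseteq> T"
  shows "is_distr T (pushforward S \<mu> h)"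
  using assms Expect_pushforward[OF assms(2-4), of \<mu> "\<lambda>_. 1"]
  unfolding is_distr_def Expect_def pushforward_def by (auto intro: sum_nonneg)

lemma vimage_Inl_Inr_ideals:
  "vimage Inl ` ideals (P <+> Q) (sum_le leP leQ) \<subseteq> ideals P leP"
  "vimage Inr ` ideals (P <+> Q) (sum_le leP leQ) \<subseteq> ideals Q leQ"
  using vimage_Inl_ideal vimage_Inr_ideal by blast+

lemma finite_ideals_Plus:
  assumes "finite P" "finite Q"
  shows "finite (ideals (P <+> Q) (sum_le leP leQ))"
  using assms by (simp add: finite_ideals)

lemma toggle_symmetric_marginals:
  assumes "finite P" "finite Q" and sym: "toggle_symmetric (P <+> Q) (sum_le leP leQ) \<mu>"
  shows "toggle_symmetric P leP (pushforward (ideals (P <+> Q) (sum_le leP leQ)) \<mu> (vimage Inl))"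
    and "toggle_symmetric Q leQ (pushforward (ideals (P <+> Q) (sum_le leP leQ)) \<mu> (vimage Inr))"
proof -
  let ?Z = "ideals (P <+> Q) (sum_le leP leQ)"
  have "Expect ?Z \<mu> (Tplus (P <+> Q) (sum_le leP leQ) u) = Expect ?Z \<mu> (Tminus (P <+> Q) (sum_le leP leQ) u)"
    if "u \<in> P <+> Q" for u
    using sym that unfolding toggle_symmetric_def by blast
  note sym_Inl = this[OF InlI] and sym_Inr = this[OF InrI]
  note push = Expect_pushforward[OF finite_ideals_Plus[OF assms(1,2)] finite_ideals[OF assms(1)]
      vimage_Inl_Inr_ideals(1)[of P Q leP leQ]]
    Expect_pushforward[OF finite_ideals_Plus[OF assms(1,2)] finite_ideals[OF assms(2)]
      vimage_Inl_Inr_ideals(2)[of P Q leP leQ]]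
  show "toggle_symmetric P leP (pushforward ?Z \<mu> (vimage Inl))"
    and "toggle_symmetric Q leQ (pushforward ?Z \<mu> (vimage Inr))"
    using sym_Inl sym_Inr unfolding toggle_symmetric_def push unfolding Expect_def
    by (simp_all add: toggles_Plus)
qed

lemma tCDE_Plus:
  assumes fP: "fposet P leP" and fQ: "fposet Q leQ" and "tCDE P leP" "tCDE Q leQ"
  shows "tCDE (P <+> Q) (sum_le leP leQ)"
  unfolding tCDE_def
proof (intro allI impI)
  let ?Z = "ideals (P <+> Q) (sum_le leP leQ)" and ?A = "ideals P leP" and ?B = "ideals Q leQ"
  fix \<mu> assume \<mu>: "is_distr ?Z \<mu> \<and> toggle_symmetric (P <+> Q) (sum_le leP leQ) \<mu>"
  let ?\<mu>P = "pushforward ?Z \<mu> (vimage Inl)" and ?\<mu>Q = "pushforward ?Z \<mu> (vimage Inr)"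
  have fin: "finite P" "finite Q" using fposetD(1) fP fQ by blast+
  note push = Expect_pushforward[OF finite_ideals_Plus[OF fin] finite_ideals[OF fin(1)]
      vimage_Inl_Inr_ideals(1)[of P Q leP leQ]]
    Expect_pushforward[OF finite_ideals_Plus[OF fin] finite_ideals[OF fin(2)]
      vimage_Inl_Inr_ideals(2)[of P Q leP leQ]]
  have "is_distr ?A ?\<mu>P" "is_distr ?B ?\<mu>Q"
    using is_distr_pushforward[OF conjunct1[OF \<mu>] finite_ideals_Plus[OF fin] finite_ideals[OF fin(1)]
        vimage_Inl_Inr_ideals(1)]
      is_distr_pushforward[OF conjunct1[OF \<mu>] finite_ideals_Plus[OF fin] finite_ideals[OF fin(2)]
        vimage_Inl_Inr_ideals(2)]
    by blast+
  then have "Expect ?A ?\<mu>P (\<lambda>I. real (ddeg ?A J_le I)) = E_uni_ddeg ?A J_le"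
    "Expect ?B ?\<mu>Q (\<lambda>K. real (ddeg ?B J_le K)) = E_uni_ddeg ?B J_le"
    using assms(3,4) toggle_symmetric_marginals[OF fin conjunct2[OF \<mu>]] unfolding tCDE_def by blast+
  moreover have "Expect ?Z \<mu> (\<lambda>J. real (ddeg ?Z J_le J))
      = Expect ?A ?\<mu>P (\<lambda>I. real (ddeg ?A J_le I)) + Expect ?B ?\<mu>Q (\<lambda>K. real (ddeg ?B J_le K))"
    unfolding push unfolding Expect_def
    by (simp add: ddeg_ideals_Plus[OF fP fQ] distrib_right sum.distrib cong: sum.cong)
  ultimately show "Expect ?Z \<mu> (\<lambda>J. real (ddeg ?Z J_le J)) = E_uni_ddeg ?Z J_le"
    using E_uni_ddeg_ideals_Plus[OF fP fQ] by simp
qed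

theorem proposition3p6:
  fixes P :: "'a set" and leP :: "'a \<Rightarrow> 'a \<Rightarrow> bool"
    and Q :: "'b set" and leQ :: "'b \<Rightarrow> 'b \<Rightarrow> bool"
  assumes "fposet P leP" and "fposet Q leQ"
  shows "(CDE (ideals P leP) J_le \<and> CDE (ideals Q leQ) J_le
            \<longrightarrow> CDE (ideals P leP \<times> ideals Q leQ) (prod_le J_le J_le))
       \<and> (mCDE (ideals P leP) J_le \<and> mCDE (ideals Q leQ) J_le
            \<longrightarrow> mCDE (ideals P leP \<times> ideals Q leQ) (prod_le J_le J_le))
       \<and> (tCDE P leP \<and> tCDE Q leQ \<longrightarrow> tCDE (P <+> Q) (sum_le leP leQ))"
proof -
  have J: "fposet (ideals P leP) J_le" "ideals P leP \<noteq> {}"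
    "fposet (ideals Q leQ) J_le" "ideals Q leQ \<noteq> {}"
    using fposet_ideals[OF fposetD(1)[OF assms(1)]] fposet_ideals[OF fposetD(1)[OF assms(2)]]
      empty_in_ideals by blast+
  show ?thesis
    using CDE_prod[OF J graded_ideals[OF assms(1)] graded_ideals[OF assms(2)]]
      mCDE_prod[OF J] tCDE_Plus[OF assms] by blast
qed

end
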